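(* Let $\mathbf{T}\subset\mathbb{S}^3$ be a spherical tetrahedron with Gram matrix $G=\{g_{ij}\}_{i,j=0}^3$ and edge matrix $G^\star=\{g^\star_{ij}\}_{i,j=0}^3$, and let $c_{ij}$, $c^\star_{ij}$ be the $(i,j)$-cofactors of $G$ and $G^\star$ respectively. Then for all $i,j=0,1,2,3$: $$g_{ij}\,c^\star_{ij}\ge 0\qquad\text{and}\qquad g^\star_{ij}\,c_{ij}\ge 0.$$
   Context: A spherical tetrahedron $\mathbf{T}\subset\mathbb{S}^3\subset\mathbb{R}^4$ is the intersection of $\mathbb{S}^3$ with the cone $\{\sum\lambda_i\mathrm{p}_i:\lambda_i\ge0\}$ over four linearly independent unit vectors $\mathrm{p}_0,\dots,\mathrm{p}_3$. Its edge matrix is $G^\star=(\langle\mathrm{p}_i,\mathrm{p}_j\rangle)_{i,j=0}^3$, and its Gram matrix is $G=(\langle\mathrm{v}_i,\mathrm{v}_j\rangle)_{i,j=0}^3$, where $\mathrm{v}_i$ is the outer unit normal to the face opposite $\mathrm{p}_i$. The $(i,j)$-cofactor of a matrix is $(-1)^{i+j}$ times the determinant of the matrix with row $i$ and column $j$ deleted. *)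

theory Defs
  imports "HOL-Analysis.Analysis" "Jordan_Normal_Form.Determinant"
begin

text \<open>The 4x4 matrix of pairwise inner products (indices 0..3), as a JNF matrix, so that
  the JNF notion of (i,j)-cofactor ((-1)^(i+j) times the minor with row i and column j
  deleted) applies.\<close>

definition gram4 :: "(nat \<Rightarrow> real^4) \<Rightarrow> real mat" where
  "gram4 x = mat 4 4 (\<lambda>(i, j). x i \<bullet> x j)"

text \<open>v i is the outer unit normal to the face of the spherical tetrahedron spanned by
  p 0..p 3 opposite to p i: unit, orthogonal to all p j (j ~= i), pointing away from p i.\<close>

definition outer_unit_normals :: "(nat \<Rightarrow> real^4) \<Rightarrow> (nat \<Rightarrow> real^4) \<Rightarrow> bool" where
  "outer_unit_normals p v \<longleftrightarrow>
     (\<forall>i<4. norm (v i) = 1 \<and> v i \<bullet> p i < 0 \<and> (\<forall>j<4. j \<noteq> i \<longrightarrow> v i \<bullet> p j = 0))"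

end

theory Submission
  imports Defs
begin

text \<open>Write G = (v_i \<bullet> v_j) and G* = (p_i \<bullet> p_j), and put d_k = v_k \<bullet> p_k < 0, D = diag d.
  Since v_i \<bullet> p_j = 0 for i \<noteq> j, expanding v_i in the basis p gives
  v_i = \<Sum>_k (g_ik / d_k) p_k, i.e. G D^-1 G* = D. Hence G = D (G*)^-1 D, so the adjugate
  formula and the symmetry of G* give det G* \<cdot> g_ij c*_ij = d_i d_j (c*_ij)^2 \<ge> 0, and
  det G* > 0 as the Gram determinant of a basis. Transposing the relation gives G* D^-1 G = D,
  and the same argument with G and G* exchanged yields the second inequality.\<close>

definition gram_mat :: "nat \<Rightarrow> (nat \<Rightarrow> 'a::real_inner) \<Rightarrow> real mat" where
  "gram_mat n x = mat n n (\<lambda>(i, j). x i \<bullet> x j)"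

lemma gram4_eq_gram_mat: "gram4 = gram_mat 4"
  by (simp add: fun_eq_iff gram4_def gram_mat_def)

lemma gram_mat_carrier [simp]: "gram_mat n x \<in> carrier_mat n n"
  by (simp add: gram_mat_def)

lemma transpose_gram_mat [simp]: "transpose_mat (gram_mat n x) = gram_mat n x"
  by (rule eq_matI) (auto simp: gram_mat_def inner_commute)

lemma det_gram_mat_nonneg:
  fixes x :: "nat \<Rightarrow> 'a::euclidean_space"
  assumes "DIM('a) = n"
  shows "0 \<le> det (gram_mat n x)"
proof -
  obtain b where b: "bij_betw b {0..<n} (Basis :: 'a set)"
    using ex_bij_betw_nat_finite[OF finite_Basis] assms by auto
  define P where "P = mat n n (\<lambda>(k, i). x i \<bullet> b k)"
  have P: "P \<in> carrier_mat n n" and PT: "transpose_mat P \<in> carrier_mat n n"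
    by (simp_all add: P_def)
  have "gram_mat n x = transpose_mat P * P"
  proof (rule eq_matI)
    fix i j assume "i < dim_row (transpose_mat P * P)" "j < dim_col (transpose_mat P * P)"
    then have ij: "i < n" "j < n" using P by auto
    have "(transpose_mat P * P) $$ (i, j) = (\<Sum>k<n. (x i \<bullet> b k) * (x j \<bullet> b k))"
      using P ij by (simp add: P_def scalar_prod_def lessThan_atLeast0)
    also have "\<dots> = (\<Sum>e\<in>Basis. (x i \<bullet> e) * (x j \<bullet> e))"
      using sum.reindex_bij_betw[OF b, of "\<lambda>e. (x i \<bullet> e) * (x j \<bullet> e)"]
      by (simp add: lessThan_atLeast0)
    also have "\<dots> = x i \<bullet> x j"
      by (rule euclidean_inner[symmetric])
    finally show "gram_mat n x $$ (i, j) = (transpose_mat P * P) $$ (i, j)"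
      using ij by (simp add: gram_mat_def)
  qed (use P in \<open>auto simp: gram_mat_def\<close>)
  then have "det (gram_mat n x) = det P * det P"
    using det_mult[OF PT P] det_transpose[OF P] by simp
  then show ?thesis by simp
qed

lemma det_mat_diag: "det (mat_diag n d) = (\<Prod>k<n. d k)"
proof -
  have "upper_triangular (mat_diag n d)"
    by (auto simp: upper_triangular_def mat_diag_def)
  then have "det (mat_diag n d) = prod_list (diag_mat (mat_diag n d))"
    by (rule det_upper_triangular[where n = n]) simp
  also have "\<dots> = (\<Prod>k<n. d k)"
    by (simp add: prod_list_diag_prod mat_diag_def lessThan_atLeast0)
  finally show ?thesis .
qed

lemma cofactor_symmetric:
  assumes X: "X \<in> carrier_mat n n" and sym: "transpose_mat X = X"
  shows "cofactor X j i = cofactor X i j"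
proof -
  have entry_sym: "X $$ (r, c) = X $$ (c, r)" if "r < n" "c < n" for r c
    using X that arg_cong[OF sym, of "\<lambda>M. M $$ (c, r)"] by simp
  have "mat_delete X j i = transpose_mat (mat_delete X i j)"
  proof (rule eq_matI)
    fix a b assume "a < dim_row (transpose_mat (mat_delete X i j))"
      "b < dim_col (transpose_mat (mat_delete X i j))"
    then have ab: "a < n - 1" "b < n - 1" using X by auto
    then have "(if a < j then a else Suc a) < n" "(if b < i then b else Suc b) < n"
      by auto
    then show "mat_delete X j i $$ (a, b) = transpose_mat (mat_delete X i j) $$ (a, b)"
      using X ab entry_sym by (simp add: mat_delete_def)
  qed (use X in \<open>simp_all add: mat_delete_def\<close>)
  then have "det (mat_delete X j i) = det (mat_delete X i j)"
    using det_transpose[OF mat_delete_carrier[OF X]] by simp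
  then show ?thesis by (simp add: cofactor_def add.commute)
qed

lemma transpose_mat_diag [simp]: "transpose_mat (mat_diag n d) = mat_diag n d"
  by (rule eq_matI) (auto simp: mat_diag_def)

lemma mat_diag_relation_swap:
  fixes X Y :: "'a::comm_semiring_1 mat"
  assumes X: "X \<in> carrier_mat n n" and Y: "Y \<in> carrier_mat n n"
    and sym: "transpose_mat X = X" "transpose_mat Y = Y"
    and rel: "Y * mat_diag n e * X = mat_diag n d"
  shows "X * mat_diag n e * Y = mat_diag n d"
proof -
  have YE: "Y * mat_diag n e \<in> carrier_mat n n" using Y by simp
  have "mat_diag n d = transpose_mat (Y * mat_diag n e * X)"
    using rel by simp
  also have "\<dots> = X * transpose_mat (Y * mat_diag n e)"
    using transpose_mult[OF YE X] sym by simp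
  also have "\<dots> = X * (mat_diag n e * Y)"
    using transpose_mult[OF Y mat_diag_dim] sym by simp
  also have "\<dots> = X * mat_diag n e * Y"
    using assoc_mult_mat[OF X mat_diag_dim Y] by simp
  finally show ?thesis by simp
qed

lemma det_mult_entry_eq_cofactor:
  fixes X Y :: "'a::field mat"
  assumes X: "X \<in> carrier_mat n n" and Y: "Y \<in> carrier_mat n n"
    and sym: "transpose_mat X = X" and d: "\<forall>k<n. d k \<noteq> 0"
    and rel: "Y * mat_diag n (\<lambda>k. 1 / d k) * X = mat_diag n d"
    and ij: "i < n" "j < n"
  shows "det X * Y $$ (i, j) = d i * d j * cofactor X i j"
proof -
  define B where "B = Y * mat_diag n (\<lambda>k. 1 / d k)"
  have B: "B \<in> carrier_mat n n" using Y by (simp add: B_def)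
  have "det X \<cdot>\<^sub>m B = B * (X * adj_mat X)"
    using adj_mat(2)[OF X] B by (simp add: mult_smult_distrib[OF B one_carrier_mat])
  also have "\<dots> = mat_diag n d * adj_mat X"
    using assoc_mult_mat[OF B X adj_mat(1)[OF X]] rel by (simp add: B_def)
  finally have "det X \<cdot>\<^sub>m B = mat_diag n d * adj_mat X" .
  from arg_cong[OF this, of "\<lambda>M. M $$ (i, j)"]
  have "det X * B $$ (i, j) = (mat_diag n d * adj_mat X) $$ (i, j)"
    using ij B by simp
  also have "\<dots> = d i * cofactor X j i"
    unfolding mat_diag_mult_left[OF adj_mat(1)[OF X]] using ij X by (simp add: adj_mat_def)
  finally have "det X * B $$ (i, j) = d i * cofactor X j i" .
  moreover have "B $$ (i, j) = Y $$ (i, j) / d j"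
    using ij Y by (simp add: B_def mat_diag_mult_right[OF Y])
  ultimately show ?thesis
    using d ij cofactor_symmetric[OF X sym] by (simp add: field_simps)
qed

lemma entry_mult_cofactor_nonneg:
  fixes X Y :: "'a::linordered_field mat"
  assumes X: "X \<in> carrier_mat n n" and Y: "Y \<in> carrier_mat n n"
    and sym: "transpose_mat X = X" and det: "0 \<le> det X"
    and d: "\<forall>k<n. \<forall>l<n. 0 < d k * d l"
    and rel: "Y * mat_diag n (\<lambda>k. 1 / d k) * X = mat_diag n d"
    and ij: "i < n" "j < n"
  shows "0 \<le> Y $$ (i, j) * cofactor X i j"
proof -
  have d0: "\<forall>k<n. d k \<noteq> 0"
  proof (intro allI impI)
    fix k assume "k < n"
    then have "0 < d k * d k" using d by blast
    then show "d k \<noteq> 0" by auto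
  qed
  have "det (Y * mat_diag n (\<lambda>k. 1 / d k)) * det X = (\<Prod>k<n. d k)"
    using rel det_mult[of "Y * mat_diag n (\<lambda>k. 1 / d k)" n X] X Y
    by (simp add: det_mat_diag)
  moreover have "(\<Prod>k<n. d k) \<noteq> 0" using d0 by simp
  ultimately have det_pos: "0 < det X" using det by (cases "det X = 0") auto
  have "det X * (Y $$ (i, j) * cofactor X i j) = (d i * d j) * (cofactor X i j)\<^sup>2"
    using det_mult_entry_eq_cofactor[OF X Y sym d0 rel ij] by (simp add: power2_eq_square)
  moreover have "0 < d i * d j" using d ij by blast
  ultimately have "0 \<le> det X * (Y $$ (i, j) * cofactor X i j)" by simp
  with det_pos show ?thesis by (simp add: zero_le_mult_iff)
qed

lemma dual_basis_expansion:
  fixes p v :: "nat \<Rightarrow> 'a::real_inner"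
  assumes span: "span (p ` {..<n}) = UNIV"
    and orth: "\<forall>i<n. \<forall>j<n. i \<noteq> j \<longrightarrow> v i \<bullet> p j = 0"
    and diag: "\<forall>k<n. v k \<bullet> p k \<noteq> 0"
    and i: "i < n"
  shows "v i = (\<Sum>k<n. ((v i \<bullet> v k) / (v k \<bullet> p k)) *\<^sub>R p k)"
proof -
  have inj: "inj_on p {..<n}"
  proof (rule inj_onI, rule ccontr)
    fix k l assume kl: "k \<in> {..<n}" "l \<in> {..<n}" "p k = p l" "k \<noteq> l"
    then have "v k \<bullet> p k = 0" using orth by auto
    then show False using diag kl by auto
  qed
  obtain u where "v i = (\<Sum>x\<in>p ` {..<n}. u x *\<^sub>R x)"
    using span span_finite[of "p ` {..<n}"] by auto
  define a where "a k = u (p k)" for k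
  have expansion: "v i = (\<Sum>k<n. a k *\<^sub>R p k)"
    using \<open>v i = _\<close> sum.reindex[OF inj, of "\<lambda>x. u x *\<^sub>R x"] by (simp add: a_def)
  have "a j = (v i \<bullet> v j) / (v j \<bullet> p j)" if j: "j < n" for j
  proof -
    have "v i \<bullet> v j = (\<Sum>k<n. a k * (p k \<bullet> v j))"
      unfolding expansion by (simp add: inner_sum_left)
    also have "\<dots> = a j * (v j \<bullet> p j)"
      using j orth by (subst sum.remove[of _ j]) (auto simp: inner_commute)
    finally show ?thesis using diag j by simp
  qed
  then show ?thesis unfolding expansion by simp
qed

lemma gram_mat_dual_relation:
  fixes p v :: "nat \<Rightarrow> 'a::real_inner"
  assumes span: "span (p ` {..<n}) = UNIV"
    and orth: "\<forall>i<n. \<forall>j<n. i \<noteq> j \<longrightarrow> v i \<bullet> p j = 0"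
    and diag: "\<forall>k<n. v k \<bullet> p k \<noteq> 0"
  shows "gram_mat n v * mat_diag n (\<lambda>k. 1 / (v k \<bullet> p k)) * gram_mat n p
       = mat_diag n (\<lambda>k. v k \<bullet> p k)"
proof (rule eq_matI)
  fix i j assume "i < dim_row (mat_diag n (\<lambda>k. v k \<bullet> p k))"
    "j < dim_col (mat_diag n (\<lambda>k. v k \<bullet> p k))"
  then have ij: "i < n" "j < n" by (simp_all add: mat_diag_def)
  have "(gram_mat n v * mat_diag n (\<lambda>k. 1 / (v k \<bullet> p k)) * gram_mat n p) $$ (i, j)
      = (\<Sum>k<n. (v i \<bullet> v k) / (v k \<bullet> p k) * (p k \<bullet> p j))"
    unfolding mat_diag_mult_right[OF gram_mat_carrier] using ij
    by (simp add: gram_mat_def scalar_prod_def lessThan_atLeast0)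
  also have "\<dots> = (\<Sum>k<n. ((v i \<bullet> v k) / (v k \<bullet> p k)) *\<^sub>R p k) \<bullet> p j"
    by (simp add: inner_sum_left)
  also have "\<dots> = v i \<bullet> p j"
    using dual_basis_expansion[OF span orth diag ij(1)] by simp
  also have "\<dots> = mat_diag n (\<lambda>k. v k \<bullet> p k) $$ (i, j)"
    using ij orth by (auto simp: mat_diag_def)
  finally show "(gram_mat n v * mat_diag n (\<lambda>k. 1 / (v k \<bullet> p k)) * gram_mat n p) $$ (i, j)
      = mat_diag n (\<lambda>k. v k \<bullet> p k) $$ (i, j)" .
qed (simp_all add: mat_diag_def gram_mat_def)

theorem proposition3:
  fixes p v :: "nat \<Rightarrow> real^4" and i j :: nat
  assumes unit: "\<forall>k<4. norm (p k) = 1"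
    and indep: "inj_on p {0..<4}" "independent (p ` {0..<4})"
    and normals: "outer_unit_normals p v"
    and ij: "i < 4" "j < 4"
  shows "(gram4 v) $$ (i, j) * Determinant.cofactor (gram4 p) i j \<ge> 0
       \<and> (gram4 p) $$ (i, j) * Determinant.cofactor (gram4 v) i j \<ge> 0"
proof -
  have "card (p ` {..<4}) = dim (UNIV :: (real^4) set)"
    using indep(1) by (simp add: card_image lessThan_atLeast0)
  then have span: "span (p ` {..<4}) = UNIV"
    using card_eq_dim[of "p ` {..<4}" UNIV] indep(2) by (auto simp: lessThan_atLeast0)
  define d where "d k = v k \<bullet> p k" for k
  have orth: "\<forall>i<4. \<forall>j<4. i \<noteq> j \<longrightarrow> v i \<bullet> p j = 0"
    and d_neg: "\<forall>k<4. d k < 0"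
    using normals by (simp_all add: outer_unit_normals_def d_def)
  then have rel: "gram_mat 4 v * mat_diag 4 (\<lambda>k. 1 / d k) * gram_mat 4 p = mat_diag 4 d"
    using gram_mat_dual_relation[OF span orth] unfolding d_def by force
  have d_sign: "\<forall>k<4. \<forall>l<4. 0 < d k * d l"
    using d_neg by (simp add: mult_neg_neg)
  have det_nonneg: "0 \<le> det (gram_mat 4 x)" for x :: "nat \<Rightarrow> real^4"
    by (rule det_gram_mat_nonneg) simp
  show ?thesis
    unfolding gram4_eq_gram_mat
    using entry_mult_cofactor_nonneg[OF _ _ _ det_nonneg d_sign rel ij]
      entry_mult_cofactor_nonneg[OF _ _ _ det_nonneg d_sign
        mat_diag_relation_swap[OF _ _ _ _ rel] ij]
    by simp
qed

end
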